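(* For every $v\in\big[-B^{1/(1+\epsilon)},\,B^{1/(1+\epsilon)}(1-\pi)^{-1/(1+\epsilon)}\big)$, the set $\hat S(v)$ is compact.
   Context: $\pi\in(0,1)$, $\epsilon>0$, $B>0$. For $\lambda\in\mathbb{R}^3$ and $X\in\mathbb{R}$: $g^U(X,\lambda,v)=1+\lambda_1v-\lambda_2(1-\pi)+\lambda_3(|X|^{1+\epsilon}-B)-\big(\frac{\lambda_1X}{1-\pi}-\lambda_2\big)_+$. $\hat S(v)=\{\lambda\in\mathbb{R}^3:\lambda_1\ge0,\lambda_2\in\mathbb{R},\lambda_3\ge0,\ g^U(x,\lambda,v)\ge0\ \forall x\in\mathbb{R}\}$. *)

theory Defs
  imports "HOL-Analysis.Analysis"
begin

definition pos_part :: "real \<Rightarrow> real" where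
  "pos_part t = max t 0"

definition gU :: "real \<Rightarrow> real \<Rightarrow> real \<Rightarrow> real \<Rightarrow> real ^ 3 \<Rightarrow> real \<Rightarrow> real" where
  "gU p eps B X lam v =
     1 + lam $ 1 * v - lam $ 2 * (1 - p) + lam $ 3 * (\<bar>X\<bar> powr (1 + eps) - B)
       - pos_part (lam $ 1 * X / (1 - p) - lam $ 2)"

definition S_hat :: "real \<Rightarrow> real \<Rightarrow> real \<Rightarrow> real \<Rightarrow> (real ^ 3) set" where
  "S_hat p eps B v = {lam. lam $ 1 \<ge> 0 \<and> lam $ 3 \<ge> 0 \<and> (\<forall>x::real. gU p eps B x lam v \<ge> 0)}"

end

theory Submission
  imports Defs
begin

text \<open>Every constraint \<open>gU p eps B x lam v \<ge> 0\<close> is a closed condition on \<open>lam\<close>, so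
  \<open>S_hat\<close> is closed. For boundedness pick \<open>y > v\<close> with \<open>(1 - p) \<bar>y\<bar> powr (1 + eps) < B\<close>.
  Adding the constraints at \<open>x = y\<close> and \<open>x = 0\<close> with weights \<open>1 - p\<close> and \<open>p\<close> cancels
  \<open>lam $ 2\<close> and leaves a sum of nonpositive terms bounded below by \<open>-1\<close>; this bounds
  \<open>lam $ 1\<close>, \<open>lam $ 3\<close> from above and \<open>lam $ 2\<close> from below, and the constraint at \<open>x = 0\<close>
  alone then bounds \<open>lam $ 2\<close> from above.\<close>

lemma closed_S_hat: "closed (S_hat p eps B v)"
  unfolding S_hat_def gU_def pos_part_def divide_inverse
  by (intro closed_Collect_conj closed_Collect_all closed_Collect_le continuous_intros)

lemma S_hat_weighted_constraint:
  fixes lam :: "real ^ 3"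
  assumes "0 < p" "p < 1" "lam \<in> S_hat p eps B v"
  shows "1 + lam $ 1 * (v - y) + lam $ 3 * ((1 - p) * \<bar>y\<bar> powr (1 + eps) - B)
           + p * min (lam $ 2) 0 \<ge> 0"
proof -
  define q where "q = 1 - p"
  define a b c where "a = lam $ 1" and "b = lam $ 2" and "c = lam $ 3"
  have q: "0 < q"
    using assms(2) by (simp add: q_def)
  have g: "gU p eps B x lam v \<ge> 0" for x
    using assms(3) by (simp add: S_hat_def)
  have at_y: "1 + a * v - b * q + c * (\<bar>y\<bar> powr (1 + eps) - B) - (a * y / q - b) \<ge> 0"
    using g[of y] by (simp add: gU_def pos_part_def q_def a_def b_def c_def)
  have at_0: "1 + a * v - b * q - c * B + min b 0 \<ge> 0"
    using g[of 0] by (simp add: gU_def pos_part_def q_def a_def b_def c_def) (simp add: min_def)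
  have "q * (1 + a * v - b * q + c * (\<bar>y\<bar> powr (1 + eps) - B) - (a * y / q - b))
          + p * (1 + a * v - b * q - c * B + min b 0)
        = 1 + a * (v - y) + c * (q * \<bar>y\<bar> powr (1 + eps) - B) + p * min b 0"
    using q by (simp add: q_def field_simps)
  moreover have "0 \<le> q * (1 + a * v - b * q + c * (\<bar>y\<bar> powr (1 + eps) - B) - (a * y / q - b))
                      + p * (1 + a * v - b * q - c * B + min b 0)"
    using at_y at_0 q assms(1) by simp
  ultimately show ?thesis
    by (simp add: q_def a_def b_def c_def)
qed

lemma S_hat_subset_cbox:
  assumes "0 < p" "p < 1" "v < y" and gap: "(1 - p) * \<bar>y\<bar> powr (1 + eps) < B"
  shows "S_hat p eps B v \<subseteq>
           cbox (vector [0, - 1 / p, 0])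
                (vector [1 / (y - v), (1 + \<bar>v\<bar> / (y - v)) / (1 - p),
                         1 / (B - (1 - p) * \<bar>y\<bar> powr (1 + eps))])"
    (is "_ \<subseteq> cbox ?lo ?hi")
proof
  fix lam :: "real ^ 3"
  assume lam: "lam \<in> S_hat p eps B v"
  define a b c where "a = lam $ 1" and "b = lam $ 2" and "c = lam $ 3"
  define D where "D = B - (1 - p) * \<bar>y\<bar> powr (1 + eps)"
  have a: "a \<ge> 0" and c: "c \<ge> 0"
    using lam by (simp_all add: S_hat_def a_def c_def)
  have D: "D > 0"
    using gap by (simp add: D_def)
  have "0 \<le> (1 - p) * \<bar>y\<bar> powr (1 + eps)"
    using assms(2) by simp
  with gap have B: "0 < B"
    by linarith
  have weighted: "1 - a * (y - v) - c * D + p * min b 0 \<ge> 0"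
    using S_hat_weighted_constraint[OF assms(1,2) lam, of y]
    by (simp add: a_def b_def c_def D_def algebra_simps)
  have "0 \<le> a * (y - v)" "0 \<le> c * D" "p * min b 0 \<le> 0"
    using a c D assms(1,3) by (simp_all add: mult_nonneg_nonpos)
  moreover have "p * min b 0 \<le> p * b"
    using assms(1) by (intro mult_left_mono) simp_all
  ultimately have "a * (y - v) \<le> 1" "c * D \<le> 1" "- 1 \<le> p * b"
    using weighted by linarith+
  then have a_le: "a \<le> 1 / (y - v)" and c_le: "c \<le> 1 / D" and b_ge: "- 1 / p \<le> b"
    using assms(1,3) D by (simp_all add: field_simps)
  have "gU p eps B 0 lam v \<ge> 0"
    using lam by (simp add: S_hat_def)
  then have "b * (1 - p) \<le> 1 + a * v - c * B"
    by (simp add: gU_def pos_part_def a_def b_def c_def)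
  also have "\<dots> \<le> 1 + a * \<bar>v\<bar>"
  proof -
    have "a * v \<le> a * \<bar>v\<bar>"
      using a by (intro mult_left_mono) simp_all
    moreover have "0 \<le> c * B"
      using c B by simp
    ultimately show ?thesis
      by linarith
  qed
  also have "\<dots> \<le> 1 + \<bar>v\<bar> / (y - v)"
    using mult_right_mono[OF a_le abs_ge_zero[of v]] by simp
  finally have b_le: "b \<le> (1 + \<bar>v\<bar> / (y - v)) / (1 - p)"
    using assms(2) by (simp add: field_simps)
  show "lam \<in> cbox ?lo ?hi"
    using a c a_le b_ge b_le c_le
    by (simp add: mem_box_cart forall_3 a_def b_def c_def D_def)
qed

lemma bounded_S_hat:
  assumes "0 < p" "p < 1" "v < y" "(1 - p) * \<bar>y\<bar> powr (1 + eps) < B"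
  shows "bounded (S_hat p eps B v)"
  using bounded_subset[OF bounded_cbox S_hat_subset_cbox[OF assms]] .

lemma mult_powr_less_of_less_root:
  fixes q r t B :: real
  assumes "0 < q" "0 < r" "0 < B" "0 \<le> t" "t < (B / q) powr (1 / r)"
  shows "q * t powr r < B"
proof -
  have "t powr r < ((B / q) powr (1 / r)) powr r"
    using assms by (simp add: powr_less_mono2)
  also have "\<dots> = B / q"
    using assms by (simp add: powr_powr)
  finally show ?thesis
    using assms(1) by (simp add: field_simps)
qed

theorem lemma17:
  fixes p eps B v :: real
  assumes "0 < p" "p < 1" "eps > 0" "B > 0"
    and "- (B powr (1 / (1 + eps))) \<le> v"
    and "v < B powr (1 / (1 + eps)) * (1 - p) powr (- 1 / (1 + eps))"
  shows "compact (S_hat p eps B v)"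
proof -
  define x1 where "x1 = (B / (1 - p)) powr (1 / (1 + eps))"
  have "v < x1" "0 < x1"
    using assms by (simp_all add: x1_def powr_divide powr_minus_divide)
  define y where "y = (max v 0 + x1) / 2"
  have "v < y" "\<bar>y\<bar> < x1"
    using \<open>v < x1\<close> \<open>0 < x1\<close> by (auto simp: y_def)
  then have "(1 - p) * \<bar>y\<bar> powr (1 + eps) < B"
    using assms(2-4) by (intro mult_powr_less_of_less_root) (simp_all add: x1_def)
  then have "bounded (S_hat p eps B v)"
    using bounded_S_hat[OF assms(1,2) \<open>v < y\<close>] by blast
  then show ?thesis
    using closed_S_hat by (simp add: compact_eq_bounded_closed)
qed

end
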